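(* For every $n\geq 1$ and every $\varepsilon>0$ there is $M$ such that for all $m\geq M$, Duplicator has a winning strategy in the game $\Gamma_{\mathrm{HS}}(\mathbb M_m,\mathbb M_{m+1},n,\varepsilon)$.
   Context: $\mathbb M_m$ denotes the algebra of complex $m\times m$ matrices with matrix multiplication, addition, scalar multiplication and adjoint $a^*$ (conjugate transpose). For a vector $\xi=(x_1,\dots,x_m)\in\mathbb C^m$, $\|\xi\|=\sqrt{\sum_i|x_i|^2}$; the operator norm of $a\in\mathbb M_m$ is $\|a\|_{\mathrm{OP}}=\sup\{\|a\xi\|:\|\xi\|=1\}$, and the normalized Hilbert--Schmidt norm of $a=(a_{ij})$ is $\|a\|_{\mathrm{HS}}=\sqrt{\frac1m\sum_{i,j=1}^m|a_{ij}|^2}$. For $l,m,n\geq 1$ and $\varepsilon>0$, the game $\Gamma_{\mathrm{HS}}(\mathbb M_l,\mathbb M_m,n,\varepsilon)$ between Challenger and Duplicator lasts $n$ innings: in each inning Challenger chooses a matrix $x$ with $\|x\|_{\mathrm{OP}}\leq 1$ in one of $\mathbb M_l$, $\mathbb M_m$, and Duplicator responds with a matrix $x$ with $\|x\|_{\mathrm{OP}}\leq 1$ in the other algebra; thus in inning $j$ matrices $a_j\in\mathbb M_l$ and $b_j\in\mathbb M_m$ are determined (repetitions are allowed). After $n$ innings Duplicator wins iff for all $i,j,k\leq n$ and all complex numbers $y,z$ with $\max(|y|,|z|)\leq 1$, each of the quantities $\big|\|a_i\|_{\mathrm{HS}}-\|b_i\|_{\mathrm{HS}}\big|$, $\big|\|a_ia_j-a_k\|_{\mathrm{HS}}-\|b_ib_j-b_k\|_{\mathrm{HS}}\big|$,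 $\big|\|ya_i+za_j-a_k\|_{\mathrm{HS}}-\|yb_i+zb_j-b_k\|_{\mathrm{HS}}\big|$ and $\big|\|a_i^*-a_j\|_{\mathrm{HS}}-\|b_i^*-b_j\|_{\mathrm{HS}}\big|$ is at most $\varepsilon$; otherwise Challenger wins. A winning strategy for a player is a rule specifying that player's moves as a function of previous moves such that the player wins regardless of the opponent's play. *)

theory Defs
  imports Complex_Main "Jordan_Normal_Form.Matrix"
begin

definition cvec_norm :: "complex vec \<Rightarrow> real" where
  "cvec_norm v = sqrt (\<Sum>i<dim_vec v. (cmod (v $ i))\<^sup>2)"

definition op_norm :: "complex mat \<Rightarrow> real" where
  "op_norm a = (SUP x\<in>{x. x \<in> carrier_vec (dim_col a) \<and> cvec_norm x = 1}. cvec_norm (a *\<^sub>v x))"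

definition hs_norm :: "complex mat \<Rightarrow> real" where
  "hs_norm a = sqrt ((1 / real (dim_row a)) *
      (\<Sum>i<dim_row a. \<Sum>j<dim_col a. (cmod (a $$ (i, j)))\<^sup>2))"

definition adj :: "complex mat \<Rightarrow> complex mat" where
  "adj a = mat (dim_col a) (dim_row a) (\<lambda>(i, j). cnj (a $$ (j, i)))"

definition unit_ball :: "nat \<Rightarrow> complex mat set" where
  "unit_ball m = {x \<in> carrier_mat m m. op_norm x \<le> 1}"

text \<open>A Duplicator strategy maps the history of previous innings (each recorded as
  (side chosen by Challenger, Challenger's matrix, Duplicator's matrix)) together with
  Challenger's current move (side, matrix) to Duplicator's response.
  Side True means Challenger plays in the first algebra M_l, False means in M_m.\<close>
type_synonym dup_strategy =
  "(bool \<times> complex mat \<times> complex mat) list \<Rightarrow> bool \<Rightarrow> complex mat \<Rightarrow> complex mat"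

definition play :: "dup_strategy \<Rightarrow> (bool \<times> complex mat) list \<Rightarrow> (bool \<times> complex mat \<times> complex mat) list" where
  "play \<sigma> cs = foldl (\<lambda>h (s, x). h @ [(s, x, \<sigma> h s x)]) [] cs"

text \<open>Matrix in the first algebra (a_j) and in the second algebra (b_j) of an inning.\<close>
definition left_mat :: "bool \<times> complex mat \<times> complex mat \<Rightarrow> complex mat" where
  "left_mat e = (case e of (s, x, y) \<Rightarrow> if s then x else y)"

definition right_mat :: "bool \<times> complex mat \<times> complex mat \<Rightarrow> complex mat" where
  "right_mat e = (case e of (s, x, y) \<Rightarrow> if s then y else x)"

definition dup_wins_play :: "nat \<Rightarrow> real \<Rightarrow> (nat \<Rightarrow> complex mat) \<Rightarrow> (nat \<Rightarrow> complex mat) \<Rightarrow> bool" where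
  "dup_wins_play n \<epsilon> a b \<longleftrightarrow>
    (\<forall>i<n. \<forall>j<n. \<forall>k<n. \<forall>y z :: complex. max (cmod y) (cmod z) \<le> 1 \<longrightarrow>
       \<bar>hs_norm (a i) - hs_norm (b i)\<bar> \<le> \<epsilon> \<and>
       \<bar>hs_norm (a i * a j - a k) - hs_norm (b i * b j - b k)\<bar> \<le> \<epsilon> \<and>
       \<bar>hs_norm (y \<cdot>\<^sub>m a i + z \<cdot>\<^sub>m a j - a k) - hs_norm (y \<cdot>\<^sub>m b i + z \<cdot>\<^sub>m b j - b k)\<bar> \<le> \<epsilon> \<and>
       \<bar>hs_norm (adj (a i) - a j) - hs_norm (adj (b i) - b j)\<bar> \<le> \<epsilon>)"

text \<open>sigma is a winning strategy for Duplicator in Gamma_HS(M_l, M_m, n, eps):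
  against every sequence of n legal Challenger moves, every response of sigma is legal
  (a matrix of operator norm at most 1 in the other algebra) and Duplicator wins.
  (Since sigma is deterministic, quantifying over Challenger's move sequences covers all
  adaptive Challenger behaviour.)\<close>
definition dup_winning_strategy :: "nat \<Rightarrow> nat \<Rightarrow> nat \<Rightarrow> real \<Rightarrow> dup_strategy \<Rightarrow> bool" where
  "dup_winning_strategy l m n \<epsilon> \<sigma> \<longleftrightarrow>
    (\<forall>cs. length cs = n \<and> (\<forall>(s, x)\<in>set cs. x \<in> unit_ball (if s then l else m)) \<longrightarrow>
       (let h = play \<sigma> cs in
          (\<forall>(s, x, y)\<in>set h. y \<in> unit_ball (if s then m else l)) \<and>
          dup_wins_play n \<epsilon> (\<lambda>i. left_mat (h ! i)) (\<lambda>i. right_mat (h ! i))))"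

end

theory Submission
  imports Defs "HOL-Analysis.L2_Norm"
begin

text \<open>
  Duplicator keeps every \<open>a\<^sub>j\<close> equal to the upper left \<open>m \<times> m\<close> corner of \<open>b\<^sub>j\<close>: she
  answers \<open>x \<in> M\<^sub>m\<close> by \<open>x\<close> padded with a zero row and column, and \<open>y \<in> M\<^sub>m\<^sub>+\<^sub>1\<close> by its
  corner. Neither operation increases the operator norm, so the answers are legal.
  Every row and column of a contraction has Euclidean length at most 1, so the last row and
  column of \<open>b\<close> carry squared Hilbert--Schmidt mass at most 2; removing them changes the
  normalised squared HS norm by \<open>O(1/m)\<close> and the normalised HS norm by \<open>O(1/\<surd>m)\<close>. Taking
  corners commutes with linear combinations and adjoints, while the corner of \<open>b b'\<close>
  differs from the product of the corners by the rank one matrix formed from the last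
  column of \<open>b\<close> and the last row of \<open>b'\<close>, of normalised HS norm at most \<open>1/\<surd>m\<close>.
  Hence all quantities of the winning condition agree up to \<open>6/\<surd>m\<close>.
\<close>

lemma L2_set_le_add_L2_set:
  assumes "\<And>x. x \<in> A \<Longrightarrow> 0 \<le> f x" "\<And>x. x \<in> A \<Longrightarrow> f x \<le> g x + h x"
  shows "L2_set f A \<le> L2_set g A + L2_set h A"
  using L2_set_mono[where f = f and g = "\<lambda>x. g x + h x" and K = A] L2_set_triangle_ineq[of g h A] assms
  by force

lemma sum_power2_le_of_L2_set_le: "L2_set f A \<le> C \<Longrightarrow> (\<Sum>x\<in>A. (f x)\<^sup>2) \<le> C\<^sup>2"
  by (metis L2_set_def L2_set_nonneg power_mono real_sqrt_pow2_iff sum_nonneg zero_le_power2)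

lemma L2_set_subset_le: "finite B \<Longrightarrow> A \<subseteq> B \<Longrightarrow> L2_set f A \<le> L2_set f B"
  unfolding L2_set_def by (intro real_sqrt_le_mono sum_mono2) auto

lemma L2_set_times: "L2_set (\<lambda>(i, j). f i * g j) (A \<times> B) = L2_set f A * L2_set g B"
  unfolding L2_set_def
  by (simp add: power_mult_distrib sum_product sum.cartesian_product split_def flip: real_sqrt_mult)

lemma abs_real_sqrt_diff_le:
  fixes x y :: real
  assumes "0 \<le> x" "0 \<le> y"
  shows "\<bar>sqrt x - sqrt y\<bar> \<le> sqrt \<bar>x - y\<bar>"
  using assms sqrt_add_le_add_sqrt[of y "x - y"] sqrt_add_le_add_sqrt[of x "y - x"]
  by (cases "y \<le> x") auto

lemma abs_mean_diff_le:
  fixes x T R K :: real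
  assumes "0 < x" "0 \<le> T" "T \<le> x * K" "0 \<le> R" "R \<le> 2 * K"
  shows "\<bar>T / x - (T + R) / (x + 1)\<bar> \<le> 2 * K / x"
proof -
  have "0 \<le> x * R" "x * R \<le> 2 * (x * K)"
    using assms mult_left_mono[of R "2 * K" x] by simp_all
  then have "\<bar>T - x * R\<bar> \<le> 2 * (x * K)"
    unfolding abs_le_iff using assms by linarith
  then have "\<bar>T - x * R\<bar> / (x * (x + 1)) \<le> 2 * (x * K) / (x * (x + 1))"
    using assms(1) by (intro divide_right_mono) auto
  also have "\<dots> = 2 * K / (x + 1)"
    using assms(1) by simp
  also have "\<dots> \<le> 2 * K / x"
    using assms by (intro divide_left_mono) auto
  finally show ?thesis
    using assms(1) by (simp add: field_simps abs_divide)
qed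

section \<open>Euclidean and operator norms\<close>

lemma cvec_norm_L2: "cvec_norm v = L2_set (\<lambda>i. cmod (v $ i)) {..<dim_vec v}"
  by (simp add: cvec_norm_def L2_set_def)

lemma cvec_norm_nonneg [simp]: "0 \<le> cvec_norm v"
  by (simp add: cvec_norm_L2)

lemma cvec_norm_smult: "cvec_norm (k \<cdot>\<^sub>v v) = cmod k * cvec_norm v"
  unfolding cvec_norm_L2 by (simp add: L2_set_right_distrib norm_mult cong: L2_set_cong_simp)

lemma cmod_index_le_cvec_norm: "i < dim_vec v \<Longrightarrow> cmod (v $ i) \<le> cvec_norm v"
  unfolding cvec_norm_L2 by (rule member_le_L2_set) auto

lemma cvec_norm_eq_0_iff: "cvec_norm v = 0 \<longleftrightarrow> v = 0\<^sub>v (dim_vec v)"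
  unfolding cvec_norm_L2 by (auto simp: L2_set_eq_0_iff vec_eq_iff)

lemma cvec_norm_unit_vec:
  assumes "i < n"
  shows "cvec_norm (unit_vec n i) = 1"
proof -
  have "(\<Sum>j<n. (cmod (unit_vec n i $ j))\<^sup>2) = (\<Sum>j<n. if j = i then 1 else 0)"
    by (rule sum.cong) (auto simp: unit_vec_def)
  then show ?thesis
    using assms by (simp add: cvec_norm_def)
qed

lemma cvec_norm_vec_first_le: "n \<le> dim_vec v \<Longrightarrow> cvec_norm (vec_first v n) \<le> cvec_norm v"
  unfolding cvec_norm_def vec_first_def by (auto intro!: sum_mono2)

lemma cvec_norm_append_zero: "cvec_norm (u @\<^sub>v 0\<^sub>v k) = cvec_norm u"
  unfolding cvec_norm_def
  by (auto intro!: arg_cong[where f = sqrt] sum.mono_neutral_cong_right split: if_splits)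

lemma cvec_norm_mult_vec_le:
  assumes "a \<in> carrier_mat r c" "v \<in> carrier_vec c"
  shows "cvec_norm (a *\<^sub>v v) \<le> (\<Sum>i<r. \<Sum>j<c. cmod (a $$ (i, j))) * cvec_norm v"
proof -
  have "cvec_norm (a *\<^sub>v v) \<le> (\<Sum>i<r. cmod ((a *\<^sub>v v) $ i))"
    using assms L2_set_le_sum_abs[of "\<lambda>i. cmod ((a *\<^sub>v v) $ i)" "{..<r}"]
    by (simp add: cvec_norm_L2)
  also have "\<dots> \<le> (\<Sum>i<r. \<Sum>j<c. cmod (a $$ (i, j)) * cvec_norm v)"
  proof (rule sum_mono)
    fix i assume "i \<in> {..<r}"
    then have "cmod ((a *\<^sub>v v) $ i) = cmod (\<Sum>j<c. a $$ (i, j) * v $ j)"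
      using assms by (simp add: scalar_prod_def lessThan_atLeast0)
    also have "\<dots> \<le> (\<Sum>j<c. cmod (a $$ (i, j)) * cmod (v $ j))"
      by (rule order_trans[OF norm_sum]) (simp add: norm_mult)
    also have "\<dots> \<le> (\<Sum>j<c. cmod (a $$ (i, j)) * cvec_norm v)"
      using assms by (intro sum_mono mult_left_mono cmod_index_le_cvec_norm) auto
    finally show "cmod ((a *\<^sub>v v) $ i) \<le> (\<Sum>j<c. cmod (a $$ (i, j)) * cvec_norm v)" .
  qed
  finally show ?thesis
    by (simp add: sum_distrib_right)
qed

lemma op_norm_bdd_above:
  assumes "a \<in> carrier_mat r c"
  shows "bdd_above ((\<lambda>x. cvec_norm (a *\<^sub>v x)) ` {x \<in> carrier_vec (dim_col a). cvec_norm x = 1})"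
  using cvec_norm_mult_vec_le[OF assms] assms by (intro bdd_aboveI2) force

lemma cvec_norm_mult_vec_le_op_norm:
  assumes a: "a \<in> carrier_mat r c" and v: "v \<in> carrier_vec c"
  shows "cvec_norm (a *\<^sub>v v) \<le> op_norm a * cvec_norm v"
proof (cases "cvec_norm v = 0")
  case True
  then have "a *\<^sub>v v = 0\<^sub>v r"
    using a v by (intro eq_vecI) (auto simp: cvec_norm_eq_0_iff)
  then show ?thesis
    using True by (simp add: cvec_norm_eq_0_iff[of "0\<^sub>v r", simplified])
next
  case False
  then have pos: "cvec_norm v > 0"
    using cvec_norm_nonneg[of v] by linarith
  define u where "u = (1 / complex_of_real (cvec_norm v)) \<cdot>\<^sub>v v"
  have "u \<in> carrier_vec c" "cvec_norm u = 1"
    using v pos by (simp_all add: u_def cvec_norm_smult norm_divide)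
  then have "cvec_norm (a *\<^sub>v u) \<le> op_norm a"
    unfolding op_norm_def using a by (intro cSUP_upper[OF _ op_norm_bdd_above[OF a]]) auto
  moreover have "a *\<^sub>v u = (1 / complex_of_real (cvec_norm v)) \<cdot>\<^sub>v (a *\<^sub>v v)"
    unfolding u_def by (rule mult_mat_vec[OF a v])
  ultimately show ?thesis
    using pos by (simp add: cvec_norm_smult norm_divide divide_le_eq mult.commute)
qed

lemma op_norm_nonneg:
  assumes "0 < dim_col a"
  shows "0 \<le> op_norm a"
proof -
  have "cvec_norm (a *\<^sub>v unit_vec (dim_col a) 0) \<le> op_norm a"
    unfolding op_norm_def using assms cvec_norm_unit_vec[OF assms]
    by (intro cSUP_upper[OF _ op_norm_bdd_above[of a "dim_row a"]]) auto
  then show ?thesis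
    using cvec_norm_nonneg order_trans by blast
qed

lemma op_norm_le:
  assumes "0 < dim_col a"
    and "\<And>u. u \<in> carrier_vec (dim_col a) \<Longrightarrow> cvec_norm u = 1 \<Longrightarrow> cvec_norm (a *\<^sub>v u) \<le> C"
  shows "op_norm a \<le> C"
  unfolding op_norm_def
proof (rule cSUP_least)
  show "{x \<in> carrier_vec (dim_col a). cvec_norm x = 1} \<noteq> {}"
    using assms(1) cvec_norm_unit_vec[OF assms(1)] by (auto intro!: exI[of _ "unit_vec _ 0"])
qed (use assms(2) in auto)

lemma op_norm_mult_le:
  assumes a: "a \<in> carrier_mat r k" and b: "b \<in> carrier_mat k c" and "0 < k" "0 < c"
  shows "op_norm (a * b) \<le> op_norm a * op_norm b"
proof (rule op_norm_le)
  fix u assume u: "u \<in> carrier_vec (dim_col (a * b))" "cvec_norm u = 1"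
  then have "cvec_norm ((a * b) *\<^sub>v u) = cvec_norm (a *\<^sub>v (b *\<^sub>v u))"
    using a b by simp
  also have "\<dots> \<le> op_norm a * cvec_norm (b *\<^sub>v u)"
    using a b u by (intro cvec_norm_mult_vec_le_op_norm) auto
  also have "\<dots> \<le> op_norm a * op_norm b"
    using a b u assms(3) op_norm_nonneg[of a]
    by (intro mult_left_mono) (auto dest: cvec_norm_mult_vec_le_op_norm[OF b])
  finally show "cvec_norm ((a * b) *\<^sub>v u) \<le> op_norm a * op_norm b" .
qed (use assms in simp)

lemma unit_ball_mult: "a \<in> unit_ball n \<Longrightarrow> b \<in> unit_ball n \<Longrightarrow> 0 < n \<Longrightarrow> a * b \<in> unit_ball n"
  using op_norm_mult_le[of a n n b n] op_norm_nonneg[of a] mult_left_le[of "op_norm b" "op_norm a"]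
  by (auto simp: unit_ball_def)

section \<open>Matrices with bounded rows and columns\<close>

definition row_col_bounded :: "complex mat \<Rightarrow> real \<Rightarrow> bool" where
  "row_col_bounded a C \<longleftrightarrow>
     (\<forall>i < dim_row a. L2_set (\<lambda>j. cmod (a $$ (i, j))) {..<dim_col a} \<le> C) \<and>
     (\<forall>j < dim_col a. L2_set (\<lambda>i. cmod (a $$ (i, j))) {..<dim_row a} \<le> C)"

lemma row_col_boundedD:
  assumes "row_col_bounded a C" "a \<in> carrier_mat r c"
  shows "i < r \<Longrightarrow> L2_set (\<lambda>j. cmod (a $$ (i, j))) {..<c} \<le> C"
    and "j < c \<Longrightarrow> L2_set (\<lambda>i. cmod (a $$ (i, j))) {..<r} \<le> C"
  using assms by (auto simp: row_col_bounded_def)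

lemma row_col_bounded_mono: "row_col_bounded a C \<Longrightarrow> C \<le> D \<Longrightarrow> row_col_bounded a D"
  unfolding row_col_bounded_def by force

lemma row_col_bounded_zero: "row_col_bounded (0\<^sub>m r c) 0"
  unfolding row_col_bounded_def by (simp add: L2_set_def)

lemma row_col_bounded_majorized:
  assumes dims: "a \<in> carrier_mat r c" "b \<in> carrier_mat r c" "d \<in> carrier_mat r c"
    and "row_col_bounded b B" "row_col_bounded d D"
    and "\<And>i j. i < r \<Longrightarrow> j < c \<Longrightarrow> cmod (a $$ (i, j)) \<le> cmod (b $$ (i, j)) + cmod (d $$ (i, j))"
  shows "row_col_bounded a (B + D)"
proof -
  have "L2_set (\<lambda>j. cmod (a $$ (i, j))) {..<c} \<le> B + D" if "i < r" for i
  proof -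
    have "L2_set (\<lambda>j. cmod (b $$ (i, j))) {..<c} \<le> B" "L2_set (\<lambda>j. cmod (d $$ (i, j))) {..<c} \<le> D"
      using assms(2-5) that by (auto simp: row_col_bounded_def)
    moreover have "L2_set (\<lambda>j. cmod (a $$ (i, j))) {..<c}
        \<le> L2_set (\<lambda>j. cmod (b $$ (i, j))) {..<c} + L2_set (\<lambda>j. cmod (d $$ (i, j))) {..<c}"
      using assms(6) that by (intro L2_set_le_add_L2_set) auto
    ultimately show ?thesis by linarith
  qed
  moreover have "L2_set (\<lambda>i. cmod (a $$ (i, j))) {..<r} \<le> B + D" if "j < c" for j
  proof -
    have "L2_set (\<lambda>i. cmod (b $$ (i, j))) {..<r} \<le> B" "L2_set (\<lambda>i. cmod (d $$ (i, j))) {..<r} \<le> D"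
      using assms(2-5) that by (auto simp: row_col_bounded_def)
    moreover have "L2_set (\<lambda>i. cmod (a $$ (i, j))) {..<r}
        \<le> L2_set (\<lambda>i. cmod (b $$ (i, j))) {..<r} + L2_set (\<lambda>i. cmod (d $$ (i, j))) {..<r}"
      using assms(6) that by (intro L2_set_le_add_L2_set) auto
    ultimately show ?thesis by linarith
  qed
  ultimately show ?thesis
    using assms(1) by (simp add: row_col_bounded_def)
qed

lemma row_col_bounded_add:
  assumes "b \<in> carrier_mat r c" "d \<in> carrier_mat r c" "row_col_bounded b B" "row_col_bounded d D"
  shows "row_col_bounded (b + d) (B + D)"
  using assms by (intro row_col_bounded_majorized[of _ r c]) (auto intro: norm_triangle_ineq)

lemma row_col_bounded_minus:
  assumes "b \<in> carrier_mat r c" "d \<in> carrier_mat r c" "row_col_bounded b B" "row_col_bounded d D"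
  shows "row_col_bounded (b - d) (B + D)"
  using assms by (intro row_col_bounded_majorized[of _ r c]) (auto intro: norm_triangle_ineq4)

lemma row_col_bounded_smult:
  assumes "b \<in> carrier_mat r c" "row_col_bounded b B" "cmod y \<le> 1"
  shows "row_col_bounded (y \<cdot>\<^sub>m b) B"
proof -
  have "cmod (y * b $$ (i, j)) \<le> cmod (b $$ (i, j))" for i j
    using assms(3) by (simp add: norm_mult mult_left_le_one_le)
  then show ?thesis
    using row_col_bounded_majorized[of "y \<cdot>\<^sub>m b" r c b "0\<^sub>m r c" B 0] assms
    by (simp add: row_col_bounded_zero)
qed

lemma row_col_bounded_adj: "row_col_bounded a C \<Longrightarrow> row_col_bounded (adj a) C"
  unfolding row_col_bounded_def adj_def by (simp add: complex_mod_cnj cong: L2_set_cong_simp)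

lemma row_col_bounded_op_norm:
  assumes a: "a \<in> carrier_mat r c" and "0 < c"
  shows "row_col_bounded a (op_norm a)"
  unfolding row_col_bounded_def
proof safe
  fix i assume i: "i < dim_row a"
  define v where "v = vec c (\<lambda>j. cnj (a $$ (i, j)))"
  define S where "S = (\<Sum>j<c. (cmod (a $$ (i, j)))\<^sup>2)"
  have v: "v \<in> carrier_vec c" "cvec_norm v = sqrt S"
    by (simp_all add: v_def S_def cvec_norm_def)
  have "0 \<le> S"
    by (simp add: S_def sum_nonneg)
  have "(a *\<^sub>v v) $ i = (\<Sum>j<c. a $$ (i, j) * cnj (a $$ (i, j)))"
    using a i by (simp add: v_def scalar_prod_def lessThan_atLeast0)
  also have "\<dots> = complex_of_real S"
    by (simp add: S_def complex_mult_cnj cmod_power2)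
  finally have "S \<le> cvec_norm (a *\<^sub>v v)"
    using cmod_index_le_cvec_norm[of i "a *\<^sub>v v"] a i \<open>0 \<le> S\<close> by simp
  also have "\<dots> \<le> op_norm a * sqrt S"
    using cvec_norm_mult_vec_le_op_norm[OF a v(1)] v(2) by simp
  finally have "sqrt S * sqrt S \<le> op_norm a * sqrt S"
    using \<open>0 \<le> S\<close> by simp
  then have "sqrt S \<le> op_norm a"
    using op_norm_nonneg[of a] a \<open>0 < c\<close> \<open>0 \<le> S\<close> mult_right_le_imp_le[of "sqrt S" "sqrt S"]
    by (cases "S = 0") auto
  then show "L2_set (\<lambda>j. cmod (a $$ (i, j))) {..<dim_col a} \<le> op_norm a"
    using a by (simp add: L2_set_def S_def)
next
  fix j assume j: "j < dim_col a"
  have "a *\<^sub>v unit_vec c j = col a j"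
    using a j by (intro eq_vecI) auto
  then have "cvec_norm (col a j) \<le> op_norm a"
    using cvec_norm_mult_vec_le_op_norm[OF a, of "unit_vec c j"] cvec_norm_unit_vec a j by simp
  then show "L2_set (\<lambda>i. cmod (a $$ (i, j))) {..<dim_row a} \<le> op_norm a"
    using a j by (simp add: cvec_norm_L2 cong: L2_set_cong_simp)
qed

lemma row_col_bounded_unit_ball: "a \<in> unit_ball n \<Longrightarrow> 0 < n \<Longrightarrow> row_col_bounded a 1"
  using row_col_bounded_op_norm[of a n n] by (auto simp: unit_ball_def intro: row_col_bounded_mono)

section \<open>Corners and zero padding\<close>

definition corner :: "nat \<Rightarrow> complex mat \<Rightarrow> complex mat" where
  "corner m a = mat m m (\<lambda>ij. a $$ ij)"

definition pad :: "complex mat \<Rightarrow> complex mat" where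
  "pad x = four_block_mat x (0\<^sub>m (dim_row x) 1) (0\<^sub>m 1 (dim_col x)) (0\<^sub>m 1 1)"

lemma corner_carrier [simp]: "corner m a \<in> carrier_mat m m"
  by (simp add: corner_def)

lemma dim_corner [simp]: "dim_row (corner m a) = m" "dim_col (corner m a) = m"
  by (simp_all add: corner_def)

lemma index_corner [simp]: "i < m \<Longrightarrow> j < m \<Longrightarrow> corner m a $$ (i, j) = a $$ (i, j)"
  by (simp add: corner_def)

lemma pad_carrier: "x \<in> carrier_mat m m \<Longrightarrow> pad x \<in> carrier_mat (m + 1) (m + 1)"
  unfolding pad_def carrier_mat_def by simp

lemma corner_pad: "x \<in> carrier_mat m m \<Longrightarrow> corner m (pad x) = x"
  by (intro eq_matI) (auto simp: pad_def)

lemma corner_mult_vec: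
  assumes "a \<in> carrier_mat (m + 1) (m + 1)" "u \<in> carrier_vec m"
  shows "corner m a *\<^sub>v u = vec_first (a *\<^sub>v (u @\<^sub>v 0\<^sub>v 1)) m"
  using assms by (intro eq_vecI) (auto simp: scalar_prod_def vec_first_def)

lemma pad_mult_vec:
  assumes "x \<in> carrier_mat m m" "w \<in> carrier_vec (m + 1)"
  shows "pad x *\<^sub>v w = (x *\<^sub>v vec_first w m) @\<^sub>v 0\<^sub>v 1"
proof -
  have "pad x *\<^sub>v w = pad x *\<^sub>v (vec_first w m @\<^sub>v vec_last w 1)"
    using assms(2) by simp
  also have "\<dots> = (x *\<^sub>v vec_first w m) @\<^sub>v (0\<^sub>m 1 1 *\<^sub>v vec_last w 1)"
    using assms(1) unfolding pad_def carrier_matD[OF assms(1)] by (intro mult_mat_vec_split) auto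
  also have "0\<^sub>m 1 1 *\<^sub>v vec_last w 1 = 0\<^sub>v 1"
    by (intro eq_vecI) auto
  finally show ?thesis .
qed

lemma op_norm_corner_le:
  assumes a: "a \<in> carrier_mat (m + 1) (m + 1)" and "0 < m"
  shows "op_norm (corner m a) \<le> op_norm a"
proof (rule op_norm_le)
  fix u assume u: "u \<in> carrier_vec (dim_col (corner m a))" "cvec_norm u = 1"
  then have "cvec_norm (corner m a *\<^sub>v u) \<le> cvec_norm (a *\<^sub>v (u @\<^sub>v 0\<^sub>v 1))"
    using a by (simp add: corner_mult_vec cvec_norm_vec_first_le)
  also have "\<dots> \<le> op_norm a * cvec_norm (u @\<^sub>v 0\<^sub>v 1)"
    using u by (intro cvec_norm_mult_vec_le_op_norm[OF a] append_carrier_vec) auto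
  finally show "cvec_norm (corner m a *\<^sub>v u) \<le> op_norm a"
    using u by (simp add: cvec_norm_append_zero)
qed (use assms in simp)

lemma op_norm_pad_le:
  assumes x: "x \<in> carrier_mat m m" and "0 < m"
  shows "op_norm (pad x) \<le> op_norm x"
proof (rule op_norm_le)
  fix w assume w: "w \<in> carrier_vec (dim_col (pad x))" "cvec_norm w = 1"
  then have w': "w \<in> carrier_vec (m + 1)"
    using pad_carrier[OF x] by auto
  have "cvec_norm (pad x *\<^sub>v w) = cvec_norm (x *\<^sub>v vec_first w m)"
    using x w' by (simp add: pad_mult_vec cvec_norm_append_zero)
  also have "\<dots> \<le> op_norm x * cvec_norm (vec_first w m)"
    using x by (intro cvec_norm_mult_vec_le_op_norm) auto
  also have "\<dots> \<le> op_norm x * cvec_norm w"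
    using x w' \<open>0 < m\<close> op_norm_nonneg[of x]
    by (intro mult_left_mono cvec_norm_vec_first_le) auto
  finally show "cvec_norm (pad x *\<^sub>v w) \<le> op_norm x"
    using w by simp
qed (use pad_carrier[OF x] in simp)

lemma corner_unit_ball: "a \<in> unit_ball (m + 1) \<Longrightarrow> 0 < m \<Longrightarrow> corner m a \<in> unit_ball m"
  using op_norm_corner_le[of a m] by (auto simp: unit_ball_def)

lemma pad_unit_ball: "x \<in> unit_ball m \<Longrightarrow> 0 < m \<Longrightarrow> pad x \<in> unit_ball (m + 1)"
  using op_norm_pad_le[of x m] pad_carrier[of x m] by (auto simp: unit_ball_def)

section \<open>Hilbert--Schmidt norms of corners\<close>

lemma hs_norm_L2:
  "hs_norm a = L2_set (\<lambda>(i, j). cmod (a $$ (i, j))) ({..<dim_row a} \<times> {..<dim_col a}) / sqrt (dim_row a)"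
  by (simp add: hs_norm_def L2_set_def sum.cartesian_product real_sqrt_divide)

lemma hs_norm_diff_le:
  assumes "a \<in> carrier_mat r c" "b \<in> carrier_mat r c"
  shows "\<bar>hs_norm a - hs_norm b\<bar> \<le> hs_norm (a - b)"
proof -
  let ?L = "\<lambda>f. L2_set f ({..<r} \<times> {..<c})"
  have "?L (\<lambda>(i, j). cmod (a $$ (i, j)))
      \<le> ?L (\<lambda>(i, j). cmod (b $$ (i, j))) + ?L (\<lambda>(i, j). cmod ((a - b) $$ (i, j)))"
    using assms by (intro L2_set_le_add_L2_set) (auto intro: norm_triangle_sub)
  moreover have "?L (\<lambda>(i, j). cmod (b $$ (i, j)))
      \<le> ?L (\<lambda>(i, j). cmod (a $$ (i, j))) + ?L (\<lambda>(i, j). cmod ((a - b) $$ (i, j)))"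
    using assms by (intro L2_set_le_add_L2_set) (auto simp: norm_minus_commute[of "a $$ _"] intro: norm_triangle_sub)
  ultimately show ?thesis
    using assms unfolding hs_norm_L2
    by (simp add: abs_divide flip: diff_divide_distrib) (intro divide_right_mono; simp)
qed

lemma hs_norm_corner_diff_le:
  assumes a: "a \<in> carrier_mat (m + 1) (m + 1)" and "row_col_bounded a C" "0 < m"
  shows "\<bar>hs_norm (corner m a) - hs_norm a\<bar> \<le> sqrt (2 * C\<^sup>2 / m)"
proof -
  let ?e = "\<lambda>i j. (cmod (a $$ (i, j)))\<^sup>2"
  define T where "T = (\<Sum>i<m. \<Sum>j<m. ?e i j)"
  define R where "R = (\<Sum>i<m. ?e i m) + (\<Sum>j<m + 1. ?e m j)"
  have row: "(\<Sum>j<m + 1. ?e i j) \<le> C\<^sup>2" if "i < m + 1" for i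
    using assms(2) a that by (intro sum_power2_le_of_L2_set_le) (simp add: row_col_bounded_def)
  have col: "(\<Sum>i<m + 1. ?e i j) \<le> C\<^sup>2" if "j < m + 1" for j
    using assms(2) a that by (intro sum_power2_le_of_L2_set_le) (simp add: row_col_bounded_def)
  have "T \<le> (\<Sum>i<m. \<Sum>j<m + 1. ?e i j)"
    unfolding T_def by (intro sum_mono sum_mono2) auto
  also have "\<dots> \<le> m * C\<^sup>2"
    using sum_mono[of "{..<m}" "\<lambda>i. \<Sum>j<m + 1. ?e i j" "\<lambda>_. C\<^sup>2"] row by simp
  finally have T: "T \<le> m * C\<^sup>2" .
  have "(\<Sum>i<m. ?e i m) \<le> (\<Sum>i<m + 1. ?e i m)"
    by (intro sum_mono2) auto
  then have R: "R \<le> 2 * C\<^sup>2"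
    using row[of m] col[of m] unfolding R_def by linarith
  have "0 \<le> T" "0 \<le> R"
    by (simp_all add: T_def R_def sum_nonneg)
  have "hs_norm (corner m a) = sqrt (T / m)"
    by (simp add: hs_norm_def T_def)
  moreover have "hs_norm a = sqrt ((T + R) / (real m + 1))"
    using a by (simp add: hs_norm_def T_def R_def sum.distrib add_ac)
  moreover have "\<bar>sqrt (T / m) - sqrt ((T + R) / (real m + 1))\<bar> \<le> sqrt \<bar>T / m - (T + R) / (real m + 1)\<bar>"
    using \<open>0 \<le> T\<close> \<open>0 \<le> R\<close> by (intro abs_real_sqrt_diff_le) auto
  moreover have "\<bar>T / m - (T + R) / (real m + 1)\<bar> \<le> 2 * C\<^sup>2 / m"
    using T R \<open>0 \<le> T\<close> \<open>0 \<le> R\<close> \<open>0 < m\<close> by (intro abs_mean_diff_le) auto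
  ultimately show ?thesis
    by (metis order_trans real_sqrt_le_mono)
qed

lemma hs_norm_corner_mult_diff_le:
  assumes a: "a \<in> carrier_mat (m + 1) (m + 1)" and b: "b \<in> carrier_mat (m + 1) (m + 1)"
    and "row_col_bounded a A" "row_col_bounded b B"
  shows "hs_norm (corner m a * corner m b - corner m (a * b)) \<le> A * B / sqrt m"
proof -
  have "(corner m a * corner m b - corner m (a * b)) $$ (i, j) = - (a $$ (i, m) * b $$ (m, j))"
    if "i < m" "j < m" for i j
    using a b that by (simp add: scalar_prod_def)
  then have "hs_norm (corner m a * corner m b - corner m (a * b))
      = L2_set (\<lambda>i. cmod (a $$ (i, m))) {..<m} * L2_set (\<lambda>j. cmod (b $$ (m, j))) {..<m} / sqrt m"
    unfolding hs_norm_L2 L2_set_times[symmetric]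
    by (auto simp: norm_mult intro!: arg_cong2[where f = "(/)"] L2_set_cong)
  also have "\<dots> \<le> A * B / sqrt m"
  proof (intro divide_right_mono mult_mono)
    show "L2_set (\<lambda>i. cmod (a $$ (i, m))) {..<m} \<le> A"
      using L2_set_subset_le[of "{..<m + 1}" "{..<m}"] row_col_boundedD(2)[OF assms(3) a, of m]
      by (meson lessThan_subset_iff finite_lessThan le_add1 less_add_one order_trans)
    then show "0 \<le> A"
      using L2_set_nonneg order_trans by blast
    show "L2_set (\<lambda>j. cmod (b $$ (m, j))) {..<m} \<le> B"
      using L2_set_subset_le[of "{..<m + 1}" "{..<m}"] row_col_boundedD(1)[OF assms(4) b, of m]
      by (meson lessThan_subset_iff finite_lessThan le_add1 less_add_one order_trans)
  qed auto
  finally show ?thesis .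
qed

lemma hs_norm_corner_close:
  assumes "c \<in> carrier_mat (m + 1) (m + 1)" "row_col_bounded c 3" "0 < m"
  shows "\<bar>hs_norm (corner m c) - hs_norm c\<bar> \<le> 5 / sqrt m"
proof -
  have "sqrt (2 * 3\<^sup>2 / m) \<le> sqrt (5\<^sup>2 / m)"
    by (intro real_sqrt_le_mono divide_right_mono) auto
  then show ?thesis
    using hs_norm_corner_diff_le[OF assms] by (simp add: real_sqrt_divide)
qed

lemma hs_norm_corner_mult_minus_close:
  assumes a: "a \<in> unit_ball (m + 1)" and b: "b \<in> unit_ball (m + 1)" and c: "c \<in> unit_ball (m + 1)"
    and "0 < m"
  shows "\<bar>hs_norm (corner m a * corner m b - corner m c) - hs_norm (a * b - c)\<bar> \<le> 6 / sqrt m"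
proof -
  have carrier: "a \<in> carrier_mat (m + 1) (m + 1)" "b \<in> carrier_mat (m + 1) (m + 1)"
      "c \<in> carrier_mat (m + 1) (m + 1)"
    using a b c by (simp_all add: unit_ball_def)
  have "row_col_bounded (a * b) 1"
    using a b by (intro row_col_bounded_unit_ball[of _ "m + 1"] unit_ball_mult) auto
  then have "row_col_bounded (a * b - c) (1 + 1)"
    using carrier row_col_bounded_unit_ball[OF c]
    by (intro row_col_bounded_minus[of _ "m + 1" "m + 1"]) auto
  then have "\<bar>hs_norm (corner m (a * b - c)) - hs_norm (a * b - c)\<bar> \<le> 5 / sqrt m"
    using carrier \<open>0 < m\<close> by (intro hs_norm_corner_close) (auto elim: row_col_bounded_mono)
  moreover have "corner m a * corner m b - corner m c - corner m (a * b - c)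
      = corner m a * corner m b - corner m (a * b)"
    using carrier by (intro eq_matI) auto
  then have "hs_norm (corner m a * corner m b - corner m c - corner m (a * b - c)) \<le> 1 * 1 / sqrt m"
    using hs_norm_corner_mult_diff_le[OF carrier(1,2) row_col_bounded_unit_ball row_col_bounded_unit_ball]
      a b by simp
  moreover have "\<bar>hs_norm (corner m a * corner m b - corner m c) - hs_norm (corner m (a * b - c))\<bar>
      \<le> hs_norm (corner m a * corner m b - corner m c - corner m (a * b - c))"
    by (intro hs_norm_diff_le[of _ m m]) auto
  ultimately show ?thesis
    by (simp flip: add_divide_distrib)
qed

section \<open>Duplicator's strategy\<close>

definition corner_strategy :: "nat \<Rightarrow> dup_strategy" where
  "corner_strategy m = (\<lambda>_ s x. if s then pad x else corner m x)"

lemma play_memoryless: "play (\<lambda>_. \<tau>) cs = map (\<lambda>(s, x). (s, x, \<tau> s x)) cs"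
  by (induction cs rule: rev_induct) (auto simp: play_def)

lemma corner_strategy_move:
  assumes "x \<in> unit_ball (if s then m else m + 1)" "0 < m"
  shows "corner_strategy m h s x \<in> unit_ball (if s then m + 1 else m)"
    and "right_mat (s, x, corner_strategy m h s x) \<in> unit_ball (m + 1)"
    and "left_mat (s, x, corner_strategy m h s x) = corner m (right_mat (s, x, corner_strategy m h s x))"
  using assms pad_unit_ball corner_unit_ball corner_pad
  by (cases s; force simp: corner_strategy_def left_mat_def right_mat_def unit_ball_def)+

lemma dup_wins_play_corners:
  assumes "0 < m" "6 / sqrt m \<le> \<epsilon>"
    and b: "\<And>i. i < n \<Longrightarrow> b i \<in> unit_ball (m + 1)"
    and a: "\<And>i. i < n \<Longrightarrow> a i = corner m (b i)"
  shows "dup_wins_play n \<epsilon> a b"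
  unfolding dup_wins_play_def
proof (intro allI impI conjI)
  fix i j k y z assume ijk: "i < n" "j < n" "k < n" and yz: "max (cmod y) (cmod z) \<le> 1"
  have carrier: "b l \<in> carrier_mat (m + 1) (m + 1)" and bounded: "row_col_bounded (b l) 1"
    if "l < n" for l
    using b[OF that] row_col_bounded_unit_ball[OF b[OF that]] \<open>0 < m\<close> by (auto simp: unit_ball_def)
  note carrier_ijk = carrier[OF ijk(1)] carrier[OF ijk(2)] carrier[OF ijk(3)]
  note bounded_ijk = bounded[OF ijk(1)] bounded[OF ijk(2)] bounded[OF ijk(3)]
  note a_ijk = a[OF ijk(1)] a[OF ijk(2)] a[OF ijk(3)]
  have close: "\<bar>hs_norm (corner m c) - hs_norm c\<bar> \<le> \<epsilon>"
    if "c \<in> carrier_mat (m + 1) (m + 1)" "row_col_bounded c 3" for c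
    using hs_norm_corner_close[OF that \<open>0 < m\<close>] assms(2) divide_right_mono[of 5 6 "sqrt m"]
    by simp
  show "\<bar>hs_norm (a i) - hs_norm (b i)\<bar> \<le> \<epsilon>"
    unfolding a_ijk using carrier_ijk(1) row_col_bounded_mono[OF bounded_ijk(1)] by (intro close) auto
  show "\<bar>hs_norm (a i * a j - a k) - hs_norm (b i * b j - b k)\<bar> \<le> \<epsilon>"
    unfolding a_ijk using hs_norm_corner_mult_minus_close[OF b[OF ijk(1)] b[OF ijk(2)] b[OF ijk(3)]]
      \<open>0 < m\<close> assms(2) by simp
  let ?c = "y \<cdot>\<^sub>m b i + z \<cdot>\<^sub>m b j - b k"
  have "row_col_bounded ?c (1 + 1 + 1)"
    using carrier_ijk bounded_ijk yz
    by (intro row_col_bounded_minus[of _ "m + 1" "m + 1"] row_col_bounded_add row_col_bounded_smult) auto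
  moreover have "?c \<in> carrier_mat (m + 1) (m + 1)"
    using carrier_ijk by auto
  moreover have "y \<cdot>\<^sub>m a i + z \<cdot>\<^sub>m a j - a k = corner m ?c"
    unfolding a_ijk using carrier_ijk by (intro eq_matI) auto
  ultimately show "\<bar>hs_norm (y \<cdot>\<^sub>m a i + z \<cdot>\<^sub>m a j - a k) - hs_norm ?c\<bar> \<le> \<epsilon>"
    using close[of ?c] by (simp add: numeral_3_eq_3)
  let ?d = "adj (b i) - b j"
  have "row_col_bounded ?d (1 + 1)"
    using carrier_ijk bounded_ijk
    by (intro row_col_bounded_minus[of _ "m + 1" "m + 1"] row_col_bounded_adj) (auto simp: adj_def)
  then have "row_col_bounded ?d 3"
    by (rule row_col_bounded_mono) simp
  moreover have "?d \<in> carrier_mat (m + 1) (m + 1)"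
    using carrier_ijk by (auto simp: adj_def)
  moreover have "adj (a i) - a j = corner m ?d"
    unfolding a_ijk using carrier_ijk by (intro eq_matI) (auto simp: adj_def)
  ultimately show "\<bar>hs_norm (adj (a i) - a j) - hs_norm ?d\<bar> \<le> \<epsilon>"
    using close[of ?d] by simp
qed

lemma dup_winning_strategy_corner:
  assumes "0 < m" "6 / sqrt m \<le> \<epsilon>"
  shows "dup_winning_strategy m (m + 1) n \<epsilon> (corner_strategy m)"
  unfolding dup_winning_strategy_def Let_def
proof (intro allI impI conjI)
  fix cs :: "(bool \<times> complex mat) list"
  assume cs: "length cs = n \<and> (\<forall>(s, x)\<in>set cs. x \<in> unit_ball (if s then m else m + 1))"
  define h where "h = play (corner_strategy m) cs"
  have h: "h = map (\<lambda>(s, x). (s, x, corner_strategy m [] s x)) cs"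
    unfolding h_def corner_strategy_def by (rule play_memoryless)
  show "\<forall>(s, x, y)\<in>set (play (corner_strategy m) cs). y \<in> unit_ball (if s then m + 1 else m)"
    using cs corner_strategy_move(1)[OF _ \<open>0 < m\<close>] by (auto simp flip: h_def simp: h)
  have hi: "h ! i = (fst (cs ! i), snd (cs ! i), corner_strategy m [] (fst (cs ! i)) (snd (cs ! i)))"
    if "i < n" for i
    using cs that by (simp add: h case_prod_beta)
  have legal: "snd (cs ! i) \<in> unit_ball (if fst (cs ! i) then m else m + 1)" if "i < n" for i
  proof -
    have "(fst (cs ! i), snd (cs ! i)) \<in> set cs"
      using cs that by simp
    then show ?thesis
      using cs by blast
  qed
  show "dup_wins_play n \<epsilon> (\<lambda>i. left_mat (play (corner_strategy m) cs ! i))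
      (\<lambda>i. right_mat (play (corner_strategy m) cs ! i))"
    unfolding h_def[symmetric] using assms
  proof (rule dup_wins_play_corners)
    fix i assume "i < n"
    show "right_mat (h ! i) \<in> unit_ball (m + 1)"
      using corner_strategy_move(2)[OF legal[OF \<open>i < n\<close>] \<open>0 < m\<close>] hi[OF \<open>i < n\<close>] by simp
    show "left_mat (h ! i) = corner m (right_mat (h ! i))"
      using corner_strategy_move(3)[OF legal[OF \<open>i < n\<close>] \<open>0 < m\<close>] hi[OF \<open>i < n\<close>] by simp
  qed
qed

theorem lemma5:
  fixes n :: nat and \<epsilon> :: real
  assumes "n \<ge> 1" and "\<epsilon> > 0"
  shows "\<exists>M. \<forall>m\<ge>M. \<exists>\<sigma>. dup_winning_strategy m (m + 1) n \<epsilon> \<sigma>"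
proof -
  obtain M :: nat where M: "36 / \<epsilon>\<^sup>2 < M"
    using reals_Archimedean2 by blast
  have "dup_winning_strategy m (m + 1) n \<epsilon> (corner_strategy m)" if "M \<le> m" for m
  proof (rule dup_winning_strategy_corner)
    have "36 / \<epsilon>\<^sup>2 < m"
      using M that by (meson of_nat_le_iff less_le_trans)
    then have "36 < \<epsilon>\<^sup>2 * m"
      using assms(2) by (simp add: divide_less_eq mult.commute)
    then show "0 < m"
      by (auto intro: Nat.gr0I)
    have "sqrt 36 < sqrt (\<epsilon>\<^sup>2 * m)"
      using \<open>36 < \<epsilon>\<^sup>2 * m\<close> by (rule real_sqrt_less_mono)
    then show "6 / sqrt m \<le> \<epsilon>"
      using assms(2) \<open>0 < m\<close> by (simp add: real_sqrt_mult divide_le_eq)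
  qed
  then show ?thesis
    by blast
qed

end
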